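(* Let $R$ be a commutative Noetherian ring of prime characteristic $p$, and let $G$ be an $x$-torsion-free left $R[x,f]$-module such that the set $\mathcal{I}(G)$ of $G$-special $R$-ideals is finite. Then there exists a uniquely determined ideal $\mathfrak{b}\in\mathcal{I}(G)$ with $\operatorname{height}\mathfrak{b}\ge1$ and $\mathfrak{b}\subset\mathfrak{c}$ for every other $\mathfrak{c}\in\mathcal{I}(G)$ with $\operatorname{height}\mathfrak{c}\ge1$. Moreover, for $g\in G$ the following are equivalent: (i) $g$ is annihilated by $\mathfrak{b}R[x,f]=\bigoplus_{n\ge0}\mathfrak{b}x^n$; (ii) there exists $c\in R^\circ\cap\mathfrak{b}$ with $cx^ng=0$ for all $n\gg0$; (iii) there exists $c\in R^\circ$ with $cx^ng=0$ for all $n\gg0$.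
   Context: $R[x,f]$ is the Frobenius skew polynomial ring: free left $R$-module on $(x^i)_{i\ge0}$, with $xr=r^px$. $G$ is $x$-torsion-free if $xg=0$ implies $g=0$. The graded annihilator $\operatorname{grann}N$ of an $R[x,f]$-submodule $N$ is the set of $\sum r_ix^i$ with each $r_ix^i$ annihilating $N$. An ideal $\mathfrak{b}$ of $R$ is $G$-special if $\operatorname{grann}N=\bigoplus_{n\ge0}\mathfrak{b}x^n$ for some $R[x,f]$-submodule $N$ of $G$; $\mathcal{I}(G)$ is the set of these. The improper ideal $R$ has infinite height. $R^\circ$ is the complement of the union of the minimal primes of $R$. *)

theory Defs
  imports Main "HOL-Library.Extended_Nat" "HOL-Computational_Algebra.Primes"
begin

definition is_ideal :: "'a::comm_ring_1 set \<Rightarrow> bool" where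
  "is_ideal I \<longleftrightarrow> 0 \<in> I \<and> (\<forall>a\<in>I. \<forall>b\<in>I. a + b \<in> I) \<and> (\<forall>r. \<forall>a\<in>I. r * a \<in> I)"

definition noetherian_ring :: "'a::comm_ring_1 itself \<Rightarrow> bool" where
  "noetherian_ring _ \<longleftrightarrow>
     (\<forall>f :: nat \<Rightarrow> 'a set. (\<forall>n. is_ideal (f n) \<and> f n \<subseteq> f (Suc n)) \<longrightarrow>
        (\<exists>N. \<forall>n\<ge>N. f n = f N))"

definition prime_ideal :: "'a::comm_ring_1 set \<Rightarrow> bool" where
  "prime_ideal P \<longleftrightarrow> is_ideal P \<and> P \<noteq> UNIV \<and> (\<forall>a b. a * b \<in> P \<longrightarrow> a \<in> P \<or> b \<in> P)"

definition prime_height :: "'a::comm_ring_1 set \<Rightarrow> enat" where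
  "prime_height P = Sup {enat n | n. \<exists>c :: nat \<Rightarrow> 'a set.
      (\<forall>i\<le>n. prime_ideal (c i)) \<and> (\<forall>i<n. c i \<subset> c (Suc i)) \<and> c n = P}"

text \<open>Height of an ideal: infimum of heights of primes containing it
  (the improper ideal gets Inf {} = \<infinity>).\<close>
definition ideal_height :: "'a::comm_ring_1 set \<Rightarrow> enat" where
  "ideal_height I = Inf {prime_height P | P. prime_ideal P \<and> I \<subseteq> P}"

definition minimal_prime :: "'a::comm_ring_1 set \<Rightarrow> bool" where
  "minimal_prime P \<longleftrightarrow> prime_ideal P \<and> (\<forall>Q. prime_ideal Q \<and> Q \<subseteq> P \<longrightarrow> Q = P)"

definition R_circ :: "'a::comm_ring_1 set" where
  "R_circ = - \<Union>{P. minimal_prime P}"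

text \<open>A left R[x,f]-module: an R-module G with an additive map X (action of x)
  satisfying x r = r^p x.\<close>
definition frob_module :: "nat \<Rightarrow> ('a::comm_ring_1 \<Rightarrow> 'g::ab_group_add \<Rightarrow> 'g) \<Rightarrow> ('g \<Rightarrow> 'g) \<Rightarrow> bool" where
  "frob_module p smult X \<longleftrightarrow> module smult \<and> (\<forall>g h. X (g + h) = X g + X h)
      \<and> (\<forall>r g. X (smult r g) = smult (r ^ p) (X g))"

definition x_torsion_free :: "('g::ab_group_add \<Rightarrow> 'g) \<Rightarrow> bool" where
  "x_torsion_free X \<longleftrightarrow> (\<forall>g. X g = 0 \<longrightarrow> g = 0)"

definition frob_submodule :: "('a::comm_ring_1 \<Rightarrow> 'g::ab_group_add \<Rightarrow> 'g) \<Rightarrow> ('g \<Rightarrow> 'g) \<Rightarrow> 'g set \<Rightarrow> bool" where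
  "frob_submodule smult X N \<longleftrightarrow> 0 \<in> N \<and> (\<forall>g\<in>N. \<forall>h\<in>N. g + h \<in> N)
      \<and> (\<forall>r. \<forall>g\<in>N. smult r g \<in> N) \<and> (\<forall>g\<in>N. X g \<in> N)"

text \<open>Elements of R[x,f] are represented by their coefficient sequences
  (finitely supported c :: nat \<Rightarrow> 'a, standing for \<Sum> c n x^n).\<close>
definition skew_poly :: "(nat \<Rightarrow> 'a::comm_ring_1) set" where
  "skew_poly = {c. finite {n. c n \<noteq> 0}}"

definition skew_act :: "('a::comm_ring_1 \<Rightarrow> 'g::ab_group_add \<Rightarrow> 'g) \<Rightarrow> ('g \<Rightarrow> 'g) \<Rightarrow> (nat \<Rightarrow> 'a) \<Rightarrow> 'g \<Rightarrow> 'g" where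
  "skew_act smult X c g = (\<Sum>n\<in>{n. c n \<noteq> 0}. smult (c n) ((X ^^ n) g))"

definition grann :: "('a::comm_ring_1 \<Rightarrow> 'g::ab_group_add \<Rightarrow> 'g) \<Rightarrow> ('g \<Rightarrow> 'g) \<Rightarrow> 'g set \<Rightarrow> (nat \<Rightarrow> 'a) set" where
  "grann smult X N = {c \<in> skew_poly. \<forall>n. \<forall>g\<in>N. smult (c n) ((X ^^ n) g) = 0}"

definition graded_ext :: "'a::comm_ring_1 set \<Rightarrow> (nat \<Rightarrow> 'a) set" where
  "graded_ext b = {c \<in> skew_poly. \<forall>n. c n \<in> b}"

definition special_ideals :: "('a::comm_ring_1 \<Rightarrow> 'g::ab_group_add \<Rightarrow> 'g) \<Rightarrow> ('g \<Rightarrow> 'g) \<Rightarrow> 'a set set" where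
  "special_ideals smult X = {b. \<exists>N. frob_submodule smult X N \<and> grann smult X N = graded_ext b}"

end

theory Submission
  imports Defs
begin

text \<open>
  Because \<open>G\<close> is \<open>x\<close>-torsion-free and \<open>x\<^sup>n (r g) = r\<^bsup>p\<^sup>n\<^esup> x\<^sup>n g\<close>,
  an element \<open>r\<close> kills \<open>x\<^sup>n g\<close> only if it kills \<open>g\<close>. Hence the \<open>G\<close>-special ideals
  are exactly the annihilators of \<open>R[x,f]\<close>-submodules, and they are closed under finite
  intersections (annihilators of sums of submodules). An ideal has height at least one iff it
  lies in no minimal prime, so these ideals are closed under finite intersections as well, and
  the intersection of the finitely many special ideals of positive height is the least one,
  \<open>b\<close>.

  If \<open>c \<in> R\<degree>\<close> kills \<open>x\<^sup>n g\<close> for all \<open>n \<ge> N\<close>, let \<open>L\<close> be the submodule of all \<open>h\<close>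
  with \<open>c x\<^sup>k h = 0\<close> for every \<open>k\<close>. Its annihilator is special and contains \<open>c\<close>, so it
  has positive height and contains \<open>b\<close>; since \<open>x\<^sup>N x\<^sup>n g \<in> L\<close>, every element of \<open>b\<close>
  kills \<open>x\<^sup>n g\<close>. Conversely, a Noetherian ring has finitely many minimal primes, so prime
  avoidance yields an element of \<open>R\<degree> \<inter> b\<close>.
\<close>

section \<open>Ideals and prime avoidance\<close>

lemma ideal_zero: "is_ideal I \<Longrightarrow> 0 \<in> I"
  by (simp add: is_ideal_def)

lemma ideal_add: "is_ideal I \<Longrightarrow> a \<in> I \<Longrightarrow> b \<in> I \<Longrightarrow> a + b \<in> I"
  by (simp add: is_ideal_def)

lemma ideal_mult_left: "is_ideal I \<Longrightarrow> a \<in> I \<Longrightarrow> r * a \<in> I"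
  by (simp add: is_ideal_def)

lemma ideal_mult_right: "is_ideal I \<Longrightarrow> a \<in> I \<Longrightarrow> a * r \<in> I"
  by (metis ideal_mult_left mult.commute)

lemma ideal_add_left_iff:
  assumes "is_ideal I" "a \<in> I"
  shows "a + b \<in> I \<longleftrightarrow> b \<in> I"
proof
  assume "a + b \<in> I"
  then have "(a + b) + (-1) * a \<in> I"
    by (rule ideal_add[OF assms(1) _ ideal_mult_left[OF assms]])
  then show "b \<in> I" by simp
qed (use assms ideal_add in blast)

lemma ideal_prod:
  assumes "is_ideal I" "finite A" "x \<in> A" "f x \<in> I"
  shows "prod f A \<in> I"
  using assms by (simp add: prod.remove ideal_mult_right)

lemma ideal_Inter: "\<forall>I\<in>S. is_ideal I \<Longrightarrow> is_ideal (\<Inter>S)"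
  unfolding is_ideal_def by blast

lemma prime_ideal_is_ideal: "prime_ideal P \<Longrightarrow> is_ideal P"
  by (simp add: prime_ideal_def)

lemma prime_ideal_mult: "prime_ideal P \<Longrightarrow> a * b \<in> P \<Longrightarrow> a \<in> P \<or> b \<in> P"
  by (simp add: prime_ideal_def)

lemma prime_ideal_one: "prime_ideal P \<Longrightarrow> 1 \<notin> P"
  unfolding prime_ideal_def by (metis UNIV_eq_I ideal_mult_right mult_1)

lemma prime_ideal_prod:
  assumes "prime_ideal P" "finite A" "\<forall>x\<in>A. f x \<notin> P"
  shows "prod f A \<notin> P"
  using assms(2,3)
  by (induction A rule: finite_induct)
    (auto dest: prime_ideal_mult[OF assms(1)] simp: prime_ideal_one[OF assms(1)])

lemma prime_ideal_Int:
  assumes "prime_ideal P" "is_ideal I" "is_ideal J" "I \<inter> J \<subseteq> P"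
  shows "I \<subseteq> P \<or> J \<subseteq> P"
proof (rule ccontr)
  assume "\<not> (I \<subseteq> P \<or> J \<subseteq> P)"
  then obtain a b where "a \<in> I" "a \<notin> P" "b \<in> J" "b \<notin> P" by blast
  moreover from this have "a * b \<in> I \<inter> J"
    using assms(2,3) ideal_mult_left ideal_mult_right by blast
  ultimately show False using assms(1,4) prime_ideal_mult by blast
qed

lemma prime_ideal_Inter:
  assumes "prime_ideal P" "finite S" "\<forall>I\<in>S. is_ideal I" "\<Inter>S \<subseteq> P"
  shows "\<exists>I\<in>S. I \<subseteq> P"
  using assms(2-4)
proof (induction S rule: finite_induct)
  case empty
  then show ?case using assms(1) by (auto simp: prime_ideal_def)
next
  case (insert I S)
  then show ?case using prime_ideal_Int[OF assms(1), of I "\<Inter>S"] ideal_Inter by auto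
qed

lemma prime_ideal_Inter_chain:
  assumes "C \<noteq> {}" "\<forall>Q\<in>C. prime_ideal Q" "\<forall>Q1\<in>C. \<forall>Q2\<in>C. Q1 \<subseteq> Q2 \<or> Q2 \<subseteq> Q1"
  shows "prime_ideal (\<Inter>C)"
  unfolding prime_ideal_def
proof (intro conjI allI impI)
  show "is_ideal (\<Inter>C)" using assms(2) prime_ideal_is_ideal ideal_Inter by blast
  show "\<Inter>C \<noteq> UNIV" using assms(1,2) prime_ideal_one by blast
  fix a b assume ab: "a * b \<in> \<Inter>C"
  show "a \<in> \<Inter>C \<or> b \<in> \<Inter>C"
  proof (rule ccontr)
    assume "\<not> (a \<in> \<Inter>C \<or> b \<in> \<Inter>C)"
    then obtain Q1 Q2 where "Q1 \<in> C" "a \<notin> Q1" "Q2 \<in> C" "b \<notin> Q2" by blast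
    with assms(2,3) ab show False by (metis InterE prime_ideal_mult subsetD)
  qed
qed

lemma prime_avoidance:
  assumes "is_ideal I" "finite F" "\<forall>P\<in>F. prime_ideal P" "\<forall>P\<in>F. \<not> I \<subseteq> P"
  shows "\<exists>a\<in>I. \<forall>P\<in>F. a \<notin> P"
  using assms(2-4)
proof (induction "card F" arbitrary: F rule: less_induct)
  case less
  show ?case
  proof (cases "card F \<le> 1")
    case True
    then have "F = {} \<or> (\<exists>P. F = {P})"
      using less.prems(1) by (metis card_0_eq card_1_singletonE le_SucE One_nat_def le_zero_eq)
    then show ?thesis using less.prems ideal_zero[OF assms(1)] by auto
  next
    case False
    have "\<exists>a\<in>I. \<forall>Q\<in>F - {P}. a \<notin> Q" if "P \<in> F" for P
      using less.hyps[of "F - {P}"] less.prems that card_Diff1_less[of F P] by auto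
    then obtain f where f: "\<And>P. P \<in> F \<Longrightarrow> f P \<in> I \<and> (\<forall>Q\<in>F - {P}. f P \<notin> Q)" by metis
    show ?thesis
    proof (cases "\<exists>P\<in>F. f P \<notin> P")
      case True
      then show ?thesis using f by blast
    next
      case False
      txt \<open>Now each \<open>f P\<close> lies in \<open>P\<close> and in no other member of \<open>F\<close>,
        so \<open>f P\<^sub>0 + \<Prod>\<^bsub>Q \<noteq> P\<^sub>0\<^esub> f Q\<close> lies in no member of \<open>F\<close>.\<close>
      obtain P0 Q0 where P0: "P0 \<in> F" and Q0: "Q0 \<in> F" "Q0 \<noteq> P0"
        using \<open>\<not> card F \<le> 1\<close> less.prems(1) by (auto simp: card_le_Suc0_iff_eq)
      have in_own: "f P \<in> P" if "P \<in> F" for P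
        using False that by blast
      define a where "a = f P0 + prod f (F - {P0})"
      have "prod f (F - {P0}) \<in> I"
        using ideal_prod[OF assms(1), of "F - {P0}" Q0] f Q0 less.prems(1) by auto
      then have "a \<in> I" unfolding a_def using f[OF P0] ideal_add[OF assms(1)] by blast
      moreover have "a \<notin> Q" if Q: "Q \<in> F" for Q
      proof -
        have Q_ideal: "is_ideal Q" using Q less.prems(2) prime_ideal_is_ideal by blast
        show ?thesis
        proof (cases "Q = P0")
          case True
          have "prod f (F - {P0}) \<notin> Q"
            using prime_ideal_prod[of Q "F - {P0}" f] f less.prems Q True by auto
          then show ?thesis
            unfolding a_def using ideal_add_left_iff[OF Q_ideal] in_own[OF P0] True by simp
        next
          case False
          have "prod f (F - {P0}) \<in> Q"
            using ideal_prod[OF Q_ideal, of "F - {P0}" Q f] in_own Q False less.prems(1) by auto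
          moreover have "f P0 \<notin> Q" using f[OF P0] Q False by auto
          ultimately show ?thesis
            unfolding a_def using ideal_add_left_iff[OF Q_ideal] by (metis add.commute)
        qed
      qed
      ultimately show ?thesis by blast
    qed
  qed
qed

section \<open>Minimal primes of a Noetherian ring\<close>

definition ideal_adjoin :: "'a::comm_ring_1 set \<Rightarrow> 'a \<Rightarrow> 'a set" where
  "ideal_adjoin I c = {i + r * c | i r. i \<in> I}"

lemma mem_ideal_adjoinI: "i \<in> I \<Longrightarrow> i + r * c \<in> ideal_adjoin I c"
  unfolding ideal_adjoin_def by blast

lemma ideal_adjoin_is_ideal:
  assumes "is_ideal I"
  shows "is_ideal (ideal_adjoin I c)"
  unfolding is_ideal_def
proof (intro conjI ballI allI)
  show "0 \<in> ideal_adjoin I c"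
    using mem_ideal_adjoinI[OF ideal_zero[OF assms], of 0 c] by simp
next
  fix x y assume "x \<in> ideal_adjoin I c" "y \<in> ideal_adjoin I c"
  then obtain i r j s where "x = i + r * c" "y = j + s * c" "i \<in> I" "j \<in> I"
    unfolding ideal_adjoin_def by blast
  then show "x + y \<in> ideal_adjoin I c"
    using mem_ideal_adjoinI[OF ideal_add[OF assms], of i j "r + s" c] by (simp add: algebra_simps)
next
  fix t x assume "x \<in> ideal_adjoin I c"
  then obtain i r where "x = i + r * c" "i \<in> I"
    unfolding ideal_adjoin_def by blast
  then show "t * x \<in> ideal_adjoin I c"
    using mem_ideal_adjoinI[OF ideal_mult_left[OF assms], of i t "t * r" c]
    by (simp add: algebra_simps)
qed

lemma subset_ideal_adjoin: "I \<subseteq> ideal_adjoin I c"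
  using mem_ideal_adjoinI[of _ I 0 c] by auto

lemma mem_ideal_adjoin: "is_ideal I \<Longrightarrow> c \<in> ideal_adjoin I c"
  using mem_ideal_adjoinI[OF ideal_zero, of I 1 c] by simp

lemma ideal_adjoin_subset: "is_ideal Q \<Longrightarrow> I \<subseteq> Q \<Longrightarrow> c \<in> Q \<Longrightarrow> ideal_adjoin I c \<subseteq> Q"
  unfolding ideal_adjoin_def by (auto intro: ideal_add ideal_mult_left)

lemma wf_ideal_psupset:
  assumes "noetherian_ring TYPE('a::comm_ring_1)"
  shows "wf {(J, I). is_ideal (I::'a set) \<and> is_ideal J \<and> I \<subset> J}"
  unfolding wf_iff_no_infinite_down_chain
proof
  assume "\<exists>f. \<forall>i. (f (Suc i), f i) \<in> {(J, I). is_ideal (I::'a set) \<and> is_ideal J \<and> I \<subset> J}"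
  then obtain f :: "nat \<Rightarrow> 'a set"
    where f: "\<forall>i. is_ideal (f i) \<and> is_ideal (f (Suc i)) \<and> f i \<subset> f (Suc i)"
    by auto
  then have "\<forall>n. is_ideal (f n) \<and> f n \<subseteq> f (Suc n)"
    by (auto dest: psubset_imp_subset)
  then obtain N where N: "\<forall>n\<ge>N. f n = f N"
    using assms[unfolded noetherian_ring_def, THEN spec[of _ f]] by blast
  have "f (Suc N) = f N" using N[rule_format, of "Suc N"] by simp
  moreover have "f N \<subset> f (Suc N)" using f by blast
  ultimately show False by simp
qed

definition finite_prime_cover :: "'a::comm_ring_1 set set \<Rightarrow> 'a set \<Rightarrow> bool" where
  "finite_prime_cover F I \<longleftrightarrow> finite F \<and> (\<forall>P\<in>F. prime_ideal P) \<and>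
     (\<forall>Q. prime_ideal Q \<and> I \<subseteq> Q \<longrightarrow> (\<exists>P\<in>F. P \<subseteq> Q))"

lemma finite_prime_coverD:
  "finite_prime_cover F I \<Longrightarrow> prime_ideal Q \<Longrightarrow> I \<subseteq> Q \<Longrightarrow> \<exists>P\<in>F. P \<subseteq> Q"
  unfolding finite_prime_cover_def by blast

lemma finite_prime_cover_Un_adjoin:
  assumes a: "finite_prime_cover Fa (ideal_adjoin I a)"
    and b: "finite_prime_cover Fb (ideal_adjoin I b)"
    and "a * b \<in> I"
  shows "finite_prime_cover (Fa \<union> Fb) I"
  unfolding finite_prime_cover_def
proof (intro conjI allI impI)
  fix Q assume Q: "prime_ideal Q \<and> I \<subseteq> Q"
  then have Q_prime: "prime_ideal Q" and Q_ideal: "is_ideal Q" and "I \<subseteq> Q"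
    by (simp_all add: prime_ideal_is_ideal)
  then have "a * b \<in> Q" using \<open>a * b \<in> I\<close> by blast
  then consider "a \<in> Q" | "b \<in> Q" using Q prime_ideal_mult by blast
  then show "\<exists>P\<in>Fa \<union> Fb. P \<subseteq> Q"
  proof cases
    case 1
    then have "ideal_adjoin I a \<subseteq> Q" by (rule ideal_adjoin_subset[OF Q_ideal \<open>I \<subseteq> Q\<close>])
    then show ?thesis using finite_prime_coverD[OF a Q_prime] by auto
  next
    case 2
    then have "ideal_adjoin I b \<subseteq> Q" by (rule ideal_adjoin_subset[OF Q_ideal \<open>I \<subseteq> Q\<close>])
    then show ?thesis using finite_prime_coverD[OF b Q_prime] by auto
  qed
qed (use a b in \<open>auto simp: finite_prime_cover_def\<close>)

lemma ex_finite_prime_cover: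
  assumes noeth: "noetherian_ring TYPE('a::comm_ring_1)" and "is_ideal (I::'a set)"
  shows "\<exists>F. finite_prime_cover F I"
  using wf_ideal_psupset[OF noeth] assms(2)
proof (induction I rule: wf_induct_rule)
  case (less I)
  consider "I = UNIV" | "prime_ideal I" | a b where "a * b \<in> I" "a \<notin> I" "b \<notin> I"
    using less.prems unfolding prime_ideal_def by blast
  then show ?case
  proof cases
    case 1
    then have "finite_prime_cover {} I" by (auto simp: finite_prime_cover_def prime_ideal_def)
    then show ?thesis ..
  next
    case 2
    then have "finite_prime_cover {I} I" by (auto simp: finite_prime_cover_def)
    then show ?thesis ..
  next
    case (3 a b)
    have "\<exists>F. finite_prime_cover F (ideal_adjoin I c)" if "c \<notin> I" for c
    proof (rule less.IH)
      have "I \<subset> ideal_adjoin I c"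
        using subset_ideal_adjoin mem_ideal_adjoin[OF less.prems] that by blast
      then show "(ideal_adjoin I c, I) \<in> {(J, I). is_ideal I \<and> is_ideal J \<and> I \<subset> J}"
        using less.prems ideal_adjoin_is_ideal by blast
    qed (rule ideal_adjoin_is_ideal[OF less.prems])
    then show ?thesis
      using finite_prime_cover_Un_adjoin \<open>a * b \<in> I\<close> \<open>a \<notin> I\<close> \<open>b \<notin> I\<close> by blast
  qed
qed

lemma finite_minimal_primes:
  assumes "noetherian_ring TYPE('a::comm_ring_1)"
  shows "finite {P::'a set. minimal_prime P}"
proof -
  have "is_ideal {0::'a}" unfolding is_ideal_def by simp
  then obtain F where F: "finite_prime_cover F {0::'a}"
    using ex_finite_prime_cover[OF assms] by blast
  have "{P. minimal_prime P} \<subseteq> F"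
  proof (rule subsetI, unfold mem_Collect_eq)
    fix Q :: "'a set" assume Q: "minimal_prime Q"
    then have Q_prime: "prime_ideal Q" unfolding minimal_prime_def by simp
    then have "{0} \<subseteq> Q" using ideal_zero[OF prime_ideal_is_ideal] by simp
    then obtain P where "P \<in> F" "P \<subseteq> Q" using finite_prime_coverD[OF F Q_prime] by auto
    moreover have "prime_ideal P" using \<open>P \<in> F\<close> F unfolding finite_prime_cover_def by simp
    ultimately show "Q \<in> F" using Q unfolding minimal_prime_def by auto
  qed
  moreover have "finite F" using F unfolding finite_prime_cover_def by simp
  ultimately show ?thesis by (rule finite_subset)
qed

lemma ex_minimal_prime_subset:
  assumes "prime_ideal (P::'a::comm_ring_1 set)"
  shows "\<exists>Q. minimal_prime Q \<and> Q \<subseteq> P"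
proof -
  txt \<open>Zorn's lemma for reverse inclusion, applied to complements.\<close>
  define A where "A = uminus ` {Q::'a set. prime_ideal Q \<and> Q \<subseteq> P}"
  have "\<Union>C \<in> A" if "C \<noteq> {}" "subset.chain A C" for C
  proof -
    have primes: "\<forall>Q\<in>uminus ` C. prime_ideal Q \<and> Q \<subseteq> P"
      using that(2) unfolding A_def subset_chain_def by auto
    moreover have "\<forall>Q1\<in>uminus ` C. \<forall>Q2\<in>uminus ` C. Q1 \<subseteq> Q2 \<or> Q2 \<subseteq> Q1"
      using that(2) unfolding subset_chain_def by blast
    ultimately have "prime_ideal (\<Inter>(uminus ` C))"
      using that(1) by (intro prime_ideal_Inter_chain) auto
    moreover have "\<Inter>(uminus ` C) \<subseteq> P" using primes that(1) by blast
    ultimately have "- \<Inter>(uminus ` C) \<in> A" unfolding A_def by blast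
    then show ?thesis by (simp add: uminus_Inf image_image)
  qed
  moreover have "A \<noteq> {}" unfolding A_def using assms by blast
  ultimately obtain M where M: "M \<in> A" "\<forall>Y\<in>A. M \<subseteq> Y \<longrightarrow> Y = M"
    using subset_Zorn_nonempty[of A] by blast
  then obtain Q where Q: "M = - Q" "prime_ideal Q" "Q \<subseteq> P" unfolding A_def by blast
  have "minimal_prime Q"
    unfolding minimal_prime_def using Q M(2) unfolding A_def by blast
  then show ?thesis using Q(3) by blast
qed

section \<open>Ideals of height at least one\<close>

lemma prime_height_minimal_prime:
  assumes "minimal_prime P"
  shows "prime_height P = 0"
proof -
  have no_chain: "n = 0"
    if "\<forall>i\<le>n. prime_ideal (c i)" "\<forall>i<n. c i \<subset> c (Suc i)" "c n = P"
    for n and c :: "nat \<Rightarrow> 'a set"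
  proof (rule ccontr)
    assume "n \<noteq> 0"
    then obtain m where "n = Suc m" using not0_implies_Suc by blast
    then have "prime_ideal (c m)" "c m \<subset> P" using that by auto
    then show False using assms unfolding minimal_prime_def by blast
  qed
  have "{enat n | n. \<exists>c :: nat \<Rightarrow> 'a set.
      (\<forall>i\<le>n. prime_ideal (c i)) \<and> (\<forall>i<n. c i \<subset> c (Suc i)) \<and> c n = P} \<subseteq> {0}"
    using no_chain by (auto simp: zero_enat_def)
  then have "prime_height P \<le> Sup {0}"
    unfolding prime_height_def by (rule Sup_subset_mono)
  then show ?thesis by simp
qed

lemma one_le_prime_height:
  assumes "prime_ideal Q" "prime_ideal P" "Q \<subset> P"
  shows "1 \<le> prime_height P"
proof -
  have "\<exists>c :: nat \<Rightarrow> 'a set. (\<forall>i\<le>1. prime_ideal (c i)) \<and> (\<forall>i<1. c i \<subset> c (Suc i)) \<and> c 1 = P"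
    using assms by (intro exI[of _ "\<lambda>i. if i = 0 then Q else P"]) auto
  then have "enat 1 \<le> prime_height P"
    unfolding prime_height_def by (intro Sup_upper) blast
  then show ?thesis by (simp add: one_enat_def)
qed

lemma one_le_ideal_height_iff:
  "1 \<le> ideal_height I \<longleftrightarrow> (\<forall>P. minimal_prime P \<longrightarrow> \<not> I \<subseteq> P)"
proof
  assume height: "1 \<le> ideal_height I"
  show "\<forall>P. minimal_prime P \<longrightarrow> \<not> I \<subseteq> P"
  proof (intro allI impI notI)
    fix P assume P: "minimal_prime P" "I \<subseteq> P"
    then have "ideal_height I \<le> prime_height P"
      unfolding ideal_height_def by (intro Inf_lower) (auto simp: minimal_prime_def)
    with height show False by (simp add: prime_height_minimal_prime[OF P(1)])
  qed
next
  assume no_minimal: "\<forall>P. minimal_prime P \<longrightarrow> \<not> I \<subseteq> P"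
  show "1 \<le> ideal_height I"
    unfolding ideal_height_def
  proof (rule Inf_greatest, clarify)
    fix P assume P: "prime_ideal P" "I \<subseteq> P"
    then obtain Q where "minimal_prime Q" "Q \<subseteq> P" using ex_minimal_prime_subset by blast
    moreover from this have "Q \<noteq> P" using no_minimal P(2) by blast
    ultimately show "1 \<le> prime_height P"
      using P(1) one_le_prime_height minimal_prime_def by blast
  qed
qed

lemma one_le_ideal_height_Inter:
  assumes "finite S" "\<forall>I\<in>S. is_ideal I \<and> 1 \<le> ideal_height I"
  shows "1 \<le> ideal_height (\<Inter>S)"
  unfolding one_le_ideal_height_iff
proof (intro allI impI notI)
  fix P assume "minimal_prime P" "\<Inter>S \<subseteq> P"
  then obtain I where "I \<in> S" "I \<subseteq> P"
    using prime_ideal_Inter[of P S] assms unfolding minimal_prime_def by blast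
  with assms(2) \<open>minimal_prime P\<close> show False unfolding one_le_ideal_height_iff by blast
qed

lemma one_le_ideal_height_if_R_circ: "c \<in> R_circ \<Longrightarrow> c \<in> I \<Longrightarrow> 1 \<le> ideal_height I"
  unfolding one_le_ideal_height_iff R_circ_def by blast

lemma ex_R_circ_if_one_le_ideal_height:
  assumes "noetherian_ring TYPE('a::comm_ring_1)" "is_ideal (I::'a set)" "1 \<le> ideal_height I"
  shows "\<exists>c\<in>I. c \<in> R_circ"
proof -
  have "\<forall>P\<in>{P. minimal_prime P}. prime_ideal P" by (simp add: minimal_prime_def)
  moreover have "\<forall>P\<in>{P. minimal_prime P}. \<not> I \<subseteq> P"
    using assms(3) unfolding one_le_ideal_height_iff by simp
  ultimately obtain c where "c \<in> I" "\<forall>P\<in>{P. minimal_prime P}. c \<notin> P"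
    using prime_avoidance[OF assms(2) finite_minimal_primes[OF assms(1)]] by blast
  then show ?thesis unfolding R_circ_def by blast
qed

section \<open>Special ideals of an \<open>x\<close>-torsion-free \<open>R[x,f]\<close>-module\<close>

definition annihilator :: "('a::comm_ring_1 \<Rightarrow> 'g::ab_group_add \<Rightarrow> 'g) \<Rightarrow> 'g set \<Rightarrow> 'a set" where
  "annihilator smult N = {r. \<forall>h\<in>N. smult r h = 0}"

definition skew_monom :: "nat \<Rightarrow> 'a::comm_ring_1 \<Rightarrow> nat \<Rightarrow> 'a" where
  "skew_monom n r = (\<lambda>m. if m = n then r else 0)"

lemma skew_monom_in_graded_ext_iff:
  assumes "0 \<in> A"
  shows "skew_monom n r \<in> graded_ext A \<longleftrightarrow> r \<in> A"
proof -
  have "finite {m. skew_monom n r m \<noteq> 0}"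
    by (rule finite_subset[of _ "{n}"]) (auto simp: skew_monom_def)
  then show ?thesis
    using assms unfolding graded_ext_def skew_poly_def by (auto simp: skew_monom_def)
qed

lemma graded_ext_inject:
  assumes "graded_ext A = graded_ext B" "0 \<in> B"
  shows "A = B"
proof -
  have "skew_monom 0 0 \<in> graded_ext A"
    using skew_monom_in_graded_ext_iff[OF assms(2)] assms by simp
  then have "0 \<in> A" unfolding graded_ext_def skew_monom_def by simp
  then show ?thesis
    using skew_monom_in_graded_ext_iff[of _ 0] assms by blast
qed

lemma frob_submodule_funpow: "frob_submodule smult X N \<Longrightarrow> h \<in> N \<Longrightarrow> (X ^^ n) h \<in> N"
  by (induction n) (auto simp: frob_submodule_def)

lemma frob_submodule_sum:
  assumes "frob_submodule smult X N1" "frob_submodule smult X N2"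
    and "\<And>r g h. smult r (g + h) = smult r g + smult r h" "\<And>g h. X (g + h) = X g + X h"
  shows "frob_submodule smult X {g + h | g h. g \<in> N1 \<and> h \<in> N2}" (is "frob_submodule _ _ ?N")
proof -
  have mem: "g + h \<in> ?N" if "g \<in> N1" "h \<in> N2" for g h
    using that by blast
  have N1: "0 \<in> N1" "\<And>g h. g \<in> N1 \<Longrightarrow> h \<in> N1 \<Longrightarrow> g + h \<in> N1"
      "\<And>r g. g \<in> N1 \<Longrightarrow> smult r g \<in> N1" "\<And>g. g \<in> N1 \<Longrightarrow> X g \<in> N1"
    using assms(1) unfolding frob_submodule_def by simp_all
  have N2: "0 \<in> N2" "\<And>g h. g \<in> N2 \<Longrightarrow> h \<in> N2 \<Longrightarrow> g + h \<in> N2"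
      "\<And>r g. g \<in> N2 \<Longrightarrow> smult r g \<in> N2" "\<And>g. g \<in> N2 \<Longrightarrow> X g \<in> N2"
    using assms(2) unfolding frob_submodule_def by simp_all
  show ?thesis
    unfolding frob_submodule_def
  proof (intro conjI ballI allI)
    show "0 \<in> ?N" using mem[OF N1(1) N2(1)] by simp
  next
    fix x y assume "x \<in> ?N" "y \<in> ?N"
    then obtain g1 h1 g2 h2 where "x = g1 + h1" "y = g2 + h2"
      and "g1 \<in> N1" "g2 \<in> N1" "h1 \<in> N2" "h2 \<in> N2"
      by blast
    then show "x + y \<in> ?N" using mem[OF N1(2) N2(2), of g1 g2 h1 h2] by (simp add: add_ac)
  next
    fix r x assume "x \<in> ?N"
    then obtain g h where "x = g + h" "g \<in> N1" "h \<in> N2" by blast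
    then show "smult r x \<in> ?N" using mem[OF N1(3) N2(3)] assms(3) by simp
  next
    fix x assume "x \<in> ?N"
    then obtain g h where "x = g + h" "g \<in> N1" "h \<in> N2" by blast
    then show "X x \<in> ?N" using mem[OF N1(4) N2(4)] assms(4) by simp
  qed
qed

definition submodule_killed_by ::
    "('a::comm_ring_1 \<Rightarrow> 'g::ab_group_add \<Rightarrow> 'g) \<Rightarrow> ('g \<Rightarrow> 'g) \<Rightarrow> 'a \<Rightarrow> 'g set" where
  "submodule_killed_by smult X c = {h. \<forall>k. smult c ((X ^^ k) h) = 0}"

locale torsion_free_frob_module = module smult + X: additive X
  for smult :: "'a::comm_ring_1 \<Rightarrow> 'g::ab_group_add \<Rightarrow> 'g" and X :: "'g \<Rightarrow> 'g" +
  fixes p :: nat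
  assumes X_scale: "X (smult r g) = smult (r ^ p) (X g)"
    and X_eq_zeroD: "X g = 0 \<Longrightarrow> g = 0"
    and p_pos: "0 < p"

lemma torsion_free_frob_moduleI:
  assumes "frob_module p smult X" "x_torsion_free X" "0 < p"
  shows "torsion_free_frob_module smult X p"
  using assms unfolding frob_module_def x_torsion_free_def
  by (intro torsion_free_frob_module.intro torsion_free_frob_module_axioms.intro additive.intro)
    auto

context torsion_free_frob_module
begin

lemma funpow_X_zero: "(X ^^ n) 0 = 0"
  by (induction n) (simp_all add: X.zero)

lemma funpow_X_add: "(X ^^ n) (g + h) = (X ^^ n) g + (X ^^ n) h"
  by (induction n) (simp_all add: X.add)

lemma funpow_X_scale: "(X ^^ n) (smult r g) = smult (r ^ p ^ n) ((X ^^ n) g)"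
  by (induction n) (simp_all add: X_scale power_mult[symmetric] mult.commute)

lemma funpow_X_eq_zeroD: "(X ^^ n) g = 0 \<Longrightarrow> g = 0"
proof (induction n arbitrary: g)
  case (Suc n)
  then have "(X ^^ n) (X g) = 0" by (simp add: funpow_Suc_right del: funpow.simps)
  then show ?case using Suc.IH X_eq_zeroD by blast
qed simp

lemma scale_funpow_X_eq_zeroD:
  assumes "smult r ((X ^^ n) g) = 0"
  shows "smult r g = 0"
proof -
  have "p ^ n = Suc (p ^ n - 1)" using p_pos by simp
  then have "(X ^^ n) (smult r g) = smult (r ^ (p ^ n - 1)) (smult r ((X ^^ n) g))"
    by (metis funpow_X_scale power_Suc2 scale_scale)
  also have "\<dots> = 0" using assms by simp
  finally show ?thesis by (rule funpow_X_eq_zeroD)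
qed

lemma annihilator_is_ideal: "is_ideal (annihilator smult N)"
  unfolding is_ideal_def annihilator_def by (simp add: scale_left_distrib flip: scale_scale)

lemma grann_eq_graded_ext_annihilator:
  assumes "frob_submodule smult X N"
  shows "grann smult X N = graded_ext (annihilator smult N)"
proof -
  have "(\<forall>h\<in>N. smult r ((X ^^ n) h) = 0) \<longleftrightarrow> (\<forall>h\<in>N. smult r h = 0)" for r n
    using scale_funpow_X_eq_zeroD frob_submodule_funpow[OF assms] by blast
  then show ?thesis unfolding grann_def graded_ext_def annihilator_def by auto
qed

lemma special_ideals_iff:
  "b \<in> special_ideals smult X \<longleftrightarrow> (\<exists>N. frob_submodule smult X N \<and> b = annihilator smult N)"
proof
  assume "b \<in> special_ideals smult X"
  then obtain N where N: "frob_submodule smult X N" "grann smult X N = graded_ext b"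
    unfolding special_ideals_def by blast
  then have "graded_ext b = graded_ext (annihilator smult N)"
    by (simp add: grann_eq_graded_ext_annihilator)
  then have "b = annihilator smult N"
    using graded_ext_inject ideal_zero[OF annihilator_is_ideal] by blast
  with N(1) show "\<exists>N. frob_submodule smult X N \<and> b = annihilator smult N" by blast
next
  assume "\<exists>N. frob_submodule smult X N \<and> b = annihilator smult N"
  then show "b \<in> special_ideals smult X"
    unfolding special_ideals_def using grann_eq_graded_ext_annihilator by blast
qed

lemma special_ideal_is_ideal: "b \<in> special_ideals smult X \<Longrightarrow> is_ideal b"
  by (auto simp: special_ideals_iff annihilator_is_ideal)

lemma UNIV_special_ideal: "UNIV \<in> special_ideals smult X"
proof -
  have "frob_submodule smult X {0}" unfolding frob_submodule_def by (simp add: X.zero)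
  moreover have "annihilator smult {0} = UNIV" unfolding annihilator_def by simp
  ultimately show ?thesis unfolding special_ideals_iff by blast
qed

lemma annihilator_sum:
  assumes "0 \<in> N1" "0 \<in> N2"
  shows "annihilator smult {g + h | g h. g \<in> N1 \<and> h \<in> N2} =
    annihilator smult N1 \<inter> annihilator smult N2" (is "annihilator _ ?N = _")
proof (intro set_eqI iffI)
  fix r assume r: "r \<in> annihilator smult ?N"
  have "g + 0 \<in> ?N" if "g \<in> N1" for g using that assms(2) by blast
  moreover have "0 + h \<in> ?N" if "h \<in> N2" for h using that assms(1) by blast
  ultimately show "r \<in> annihilator smult N1 \<inter> annihilator smult N2"
    using r unfolding annihilator_def by simp
next
  fix r assume "r \<in> annihilator smult N1 \<inter> annihilator smult N2"
  then show "r \<in> annihilator smult ?N"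
    unfolding annihilator_def by (auto simp: scale_right_distrib)
qed

lemma special_ideals_Int:
  assumes "b1 \<in> special_ideals smult X" "b2 \<in> special_ideals smult X"
  shows "b1 \<inter> b2 \<in> special_ideals smult X"
proof -
  obtain N1 N2 where N: "frob_submodule smult X N1" "frob_submodule smult X N2"
    and b: "b1 = annihilator smult N1" "b2 = annihilator smult N2"
    using assms unfolding special_ideals_iff by blast
  let ?N = "{g + h | g h. g \<in> N1 \<and> h \<in> N2}"
  have "0 \<in> N1" "0 \<in> N2" using N unfolding frob_submodule_def by simp_all
  then have "annihilator smult ?N = b1 \<inter> b2" unfolding b by (rule annihilator_sum)
  moreover have "frob_submodule smult X ?N"
    using N by (rule frob_submodule_sum) (simp_all add: scale_right_distrib X.add)
  ultimately show ?thesis unfolding special_ideals_iff by blast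
qed

lemma special_ideals_Inter:
  "finite S \<Longrightarrow> S \<subseteq> special_ideals smult X \<Longrightarrow> \<Inter>S \<in> special_ideals smult X"
  by (induction S rule: finite_induct) (simp_all add: UNIV_special_ideal special_ideals_Int)

lemma skew_act_skew_monom: "skew_act smult X (skew_monom n r) g = smult r ((X ^^ n) g)"
proof (cases "r = 0")
  case False
  then have "{m. skew_monom n r m \<noteq> 0} = {n}" by (auto simp: skew_monom_def)
  then show ?thesis unfolding skew_act_def by (simp add: skew_monom_def)
qed (simp add: skew_act_def skew_monom_def)

lemma graded_ext_annihilates_iff:
  assumes "0 \<in> b"
  shows "(\<forall>c\<in>graded_ext b. skew_act smult X c g = 0) \<longleftrightarrow> (\<forall>r\<in>b. \<forall>n. smult r ((X ^^ n) g) = 0)"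
proof
  assume "\<forall>c\<in>graded_ext b. skew_act smult X c g = 0"
  then show "\<forall>r\<in>b. \<forall>n. smult r ((X ^^ n) g) = 0"
    using skew_monom_in_graded_ext_iff[OF assms] skew_act_skew_monom by metis
next
  assume "\<forall>r\<in>b. \<forall>n. smult r ((X ^^ n) g) = 0"
  then show "\<forall>c\<in>graded_ext b. skew_act smult X c g = 0"
    unfolding graded_ext_def skew_act_def by simp
qed

lemma frob_submodule_killed_by: "frob_submodule smult X (submodule_killed_by smult X c)"
  unfolding frob_submodule_def submodule_killed_by_def
proof (intro conjI ballI allI; clarsimp)
  fix r h k assume "\<forall>k. smult c ((X ^^ k) h) = 0"
  moreover have "smult c ((X ^^ k) (smult r h)) = smult (r ^ p ^ k) (smult c ((X ^^ k) h))"
    by (simp add: funpow_X_scale mult.commute)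
  ultimately show "smult c ((X ^^ k) (smult r h)) = 0" by simp
next
  fix h k assume "\<forall>k. smult c ((X ^^ k) h) = 0"
  then show "smult c ((X ^^ k) (X h)) = 0"
    by (metis funpow_Suc_right o_apply)
qed (simp_all add: funpow_X_zero funpow_X_add scale_right_distrib)

lemma least_special_ideal_annihilates:
  assumes least: "\<forall>c\<in>special_ideals smult X. 1 \<le> ideal_height c \<longrightarrow> b \<subseteq> c"
    and c: "c \<in> R_circ" "\<forall>n\<ge>N. smult c ((X ^^ n) g) = 0" and "r \<in> b"
  shows "smult r ((X ^^ n) g) = 0"
proof -
  let ?L = "submodule_killed_by smult X c"
  have special: "annihilator smult ?L \<in> special_ideals smult X"
    unfolding special_ideals_iff using frob_submodule_killed_by by blast
  have "smult c h = 0" if "h \<in> ?L" for h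
    using that unfolding submodule_killed_by_def by (force dest: spec[of _ 0])
  then have "c \<in> annihilator smult ?L" unfolding annihilator_def by simp
  then have "1 \<le> ideal_height (annihilator smult ?L)" by (rule one_le_ideal_height_if_R_circ[OF c(1)])
  then have "b \<subseteq> annihilator smult ?L" using least special by simp
  then have "r \<in> annihilator smult ?L" using \<open>r \<in> b\<close> by (rule subsetD)
  moreover have "(X ^^ N) ((X ^^ n) g) \<in> ?L"
  proof -
    have "(X ^^ k) ((X ^^ N) ((X ^^ n) g)) = (X ^^ (k + N + n)) g" for k
      by (simp add: funpow_add)
    then show ?thesis using c(2) unfolding submodule_killed_by_def by simp
  qed
  ultimately have "smult r ((X ^^ N) ((X ^^ n) g)) = 0" unfolding annihilator_def by blast
  then show ?thesis by (rule scale_funpow_X_eq_zeroD)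
qed

lemma ex1_least_special_ideal_of_positive_height:
  assumes "finite (special_ideals smult X)"
  shows "\<exists>!b. b \<in> special_ideals smult X \<and> 1 \<le> ideal_height b \<and>
           (\<forall>c\<in>special_ideals smult X. 1 \<le> ideal_height c \<longrightarrow> b \<subseteq> c)"
    (is "\<exists>!b. ?least b")
proof (rule ex1I)
  define S where "S = {c \<in> special_ideals smult X. 1 \<le> ideal_height c}"
  have "finite S" using assms unfolding S_def by simp
  then have "\<Inter>S \<in> special_ideals smult X" by (rule special_ideals_Inter) (auto simp: S_def)
  moreover have "1 \<le> ideal_height (\<Inter>S)"
    using \<open>finite S\<close> by (rule one_le_ideal_height_Inter) (auto simp: S_def special_ideal_is_ideal)
  moreover have "\<forall>c\<in>special_ideals smult X. 1 \<le> ideal_height c \<longrightarrow> \<Inter>S \<subseteq> c"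
    unfolding S_def by (simp add: Inter_lower)
  ultimately show "?least (\<Inter>S)" by blast
  fix b assume "?least b"
  with \<open>?least (\<Inter>S)\<close> show "b = \<Inter>S" by (meson subset_antisym)
qed

lemma least_special_ideal_annihilation_iff:
  assumes noeth: "noetherian_ring TYPE('a)"
    and b: "b \<in> special_ideals smult X" "1 \<le> ideal_height b"
      "\<forall>c\<in>special_ideals smult X. 1 \<le> ideal_height c \<longrightarrow> b \<subseteq> c"
  shows "(\<forall>c\<in>graded_ext b. skew_act smult X c g = 0) \<longleftrightarrow>
           (\<exists>c\<in>R_circ \<inter> b. \<exists>N. \<forall>n\<ge>N. smult c ((X ^^ n) g) = 0)"
    and "(\<exists>c\<in>R_circ \<inter> b. \<exists>N. \<forall>n\<ge>N. smult c ((X ^^ n) g) = 0) \<longleftrightarrow>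
           (\<exists>c\<in>R_circ. \<exists>N. \<forall>n\<ge>N. smult c ((X ^^ n) g) = 0)"
proof -
  have b_ideal: "is_ideal b" using special_ideal_is_ideal b(1) .
  obtain c0 where c0: "c0 \<in> b" "c0 \<in> R_circ"
    using ex_R_circ_if_one_le_ideal_height[OF noeth b_ideal b(2)] by blast
  have i_imp_ii: "\<exists>c\<in>R_circ \<inter> b. \<exists>N. \<forall>n\<ge>N. smult c ((X ^^ n) g) = 0"
    if "\<forall>c\<in>graded_ext b. skew_act smult X c g = 0"
    using that c0 graded_ext_annihilates_iff[OF ideal_zero[OF b_ideal]] by blast
  have iii_imp_i: "\<forall>c\<in>graded_ext b. skew_act smult X c g = 0"
    if "\<exists>c\<in>R_circ. \<exists>N. \<forall>n\<ge>N. smult c ((X ^^ n) g) = 0"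
    using that least_special_ideal_annihilates[OF b(3)]
      graded_ext_annihilates_iff[OF ideal_zero[OF b_ideal]] by blast
  show "(\<forall>c\<in>graded_ext b. skew_act smult X c g = 0) \<longleftrightarrow>
           (\<exists>c\<in>R_circ \<inter> b. \<exists>N. \<forall>n\<ge>N. smult c ((X ^^ n) g) = 0)"
    using i_imp_ii iii_imp_i by blast
  show "(\<exists>c\<in>R_circ \<inter> b. \<exists>N. \<forall>n\<ge>N. smult c ((X ^^ n) g) = 0) \<longleftrightarrow>
           (\<exists>c\<in>R_circ. \<exists>N. \<forall>n\<ge>N. smult c ((X ^^ n) g) = 0)"
    using i_imp_ii iii_imp_i by blast
qed

end

theorem theorem3p12:
  fixes smult :: "'a::comm_ring_1 \<Rightarrow> 'g::ab_group_add \<Rightarrow> 'g"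
    and X :: "'g \<Rightarrow> 'g" and p :: nat
  assumes "noetherian_ring TYPE('a)"
    and "prime p" and "CHAR('a) = p"
    and "frob_module p smult X"
    and "x_torsion_free X"
    and "finite (special_ideals smult X)"
  shows "(\<exists>!b. b \<in> special_ideals smult X \<and> ideal_height b \<ge> 1 \<and>
            (\<forall>c\<in>special_ideals smult X. ideal_height c \<ge> 1 \<longrightarrow> b \<subseteq> c))
       \<and> (\<forall>b. b \<in> special_ideals smult X \<and> ideal_height b \<ge> 1 \<and>
            (\<forall>c\<in>special_ideals smult X. ideal_height c \<ge> 1 \<longrightarrow> b \<subseteq> c) \<longrightarrow>
          (\<forall>g. ((\<forall>c\<in>graded_ext b. skew_act smult X c g = 0) \<longleftrightarrow>
                  (\<exists>c\<in>R_circ \<inter> b. \<exists>N. \<forall>n\<ge>N. smult c ((X ^^ n) g) = 0))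
             \<and> ((\<exists>c\<in>R_circ \<inter> b. \<exists>N. \<forall>n\<ge>N. smult c ((X ^^ n) g) = 0) \<longleftrightarrow>
                  (\<exists>c\<in>R_circ. \<exists>N. \<forall>n\<ge>N. smult c ((X ^^ n) g) = 0))))"
proof -
  interpret torsion_free_frob_module smult X p
    using assms(2,4,5) by (intro torsion_free_frob_moduleI) (simp_all add: prime_gt_0_nat)
  show ?thesis
    by (intro conjI allI impI ex1_least_special_ideal_of_positive_height[OF assms(6)];
        elim conjE; simp add: least_special_ideal_annihilation_iff[OF assms(1)])
qed

end
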